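(* Let $G$ be a group (finite or infinite), let $F$ be a field of characteristic zero, and let $\mathfrak{S}$ be an $F$-subspace of the group ring $F[G]$ that is closed under the Hadamard product $\circ$. Then for every $\alpha\in\mathfrak{S}$ and every $c\in F\setminus\{0\}$, the simple quantity $\overline{K(\alpha,c)}$ lies in $\mathfrak{S}$.
   Context: Elements of $F[G]$ are written $\alpha=\sum_{g\in G}\alpha_g g$ with $\alpha_g\in F$, all but finitely many zero. The Hadamard product is $\alpha\circ\beta=\sum_{g\in G}\alpha_g\beta_g g$. For a finite subset $C\subseteq G$, $\overline{C}=\sum_{g\in C} g$ (a simple quantity). For $\alpha\in F[G]$ and $c\in F$, the coefficient complex is $K(\alpha,c)=\{g\in G\mid \alpha_g=c\}$ (finite when $c\neq 0$). *)

theory Defs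
  imports "HOL-Algebra.Group"
begin

text \<open>The group ring F[G] as a set of finitely supported coefficient functions
  on the carrier of G (zero outside the carrier).\<close>
definition group_ring :: "('g, 'm) monoid_scheme \<Rightarrow> ('g \<Rightarrow> 'f::field) set" where
  "group_ring G = {\<alpha>. finite {g. \<alpha> g \<noteq> 0} \<and> (\<forall>g. g \<notin> carrier G \<longrightarrow> \<alpha> g = 0)}"

definition hadamard :: "('g \<Rightarrow> 'f::field) \<Rightarrow> ('g \<Rightarrow> 'f) \<Rightarrow> ('g \<Rightarrow> 'f)" (infixl "\<circ>\<^sub>H" 70) where
  "\<alpha> \<circ>\<^sub>H \<beta> = (\<lambda>g. \<alpha> g * \<beta> g)"

text \<open>Simple quantity of a finite subset C: sum of its elements, i.e. indicator coefficients.\<close>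
definition simple_quantity :: "'g set \<Rightarrow> ('g \<Rightarrow> 'f::field)" where
  "simple_quantity C = (\<lambda>g. if g \<in> C then 1 else 0)"

definition coeff_complex :: "('g, 'm) monoid_scheme \<Rightarrow> ('g \<Rightarrow> 'f::field) \<Rightarrow> 'f \<Rightarrow> 'g set" where
  "coeff_complex G \<alpha> c = {g \<in> carrier G. \<alpha> g = c}"

definition group_ring_subspace :: "('g, 'm) monoid_scheme \<Rightarrow> ('g \<Rightarrow> 'f::field) set \<Rightarrow> bool" where
  "group_ring_subspace G S \<longleftrightarrow> S \<subseteq> group_ring G \<and> (\<lambda>_. 0) \<in> S
     \<and> (\<forall>\<alpha>\<in>S. \<forall>\<beta>\<in>S. (\<lambda>g. \<alpha> g + \<beta> g) \<in> S)
     \<and> (\<forall>a. \<forall>\<alpha>\<in>S. (\<lambda>g. a * \<alpha> g) \<in> S)"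

end

theory Submission
  imports Defs
begin

text \<open>The values of \<open>\<alpha>\<close> form a finite set \<open>{0, c} \<union> W\<close>, and on it the indicator of \<open>c\<close> is the
  Lagrange polynomial \<open>x \<prod>\<^sub>v\<^sub>\<in>\<^sub>W (x - v) / (c \<prod>\<^sub>v\<^sub>\<in>\<^sub>W (c - v))\<close>. This polynomial has no constant
  term, so applying it coefficientwise to \<open>\<alpha>\<close> only needs Hadamard products, sums and scalar
  multiples of \<open>\<alpha>\<close>, all of which stay in the subspace.\<close>

lemma group_ring_subspace_add:
  "group_ring_subspace G S \<Longrightarrow> \<alpha> \<in> S \<Longrightarrow> \<beta> \<in> S \<Longrightarrow> (\<lambda>g. \<alpha> g + \<beta> g) \<in> S"
  unfolding group_ring_subspace_def by blast

lemma group_ring_subspace_smult: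
  "group_ring_subspace G S \<Longrightarrow> \<alpha> \<in> S \<Longrightarrow> (\<lambda>g. a * \<alpha> g) \<in> S"
  unfolding group_ring_subspace_def by blast

lemma group_ring_subspace_mult_prod_diff:
  assumes sub: "group_ring_subspace G S"
    and had: "\<forall>\<alpha>\<in>S. \<forall>\<beta>\<in>S. \<alpha> \<circ>\<^sub>H \<beta> \<in> S"
    and \<alpha>: "\<alpha> \<in> S" and "finite W"
  shows "(\<lambda>g. \<alpha> g * (\<Prod>v\<in>W. \<alpha> g - v)) \<in> S"
  using \<open>finite W\<close>
proof (induction W rule: finite_induct)
  case empty
  then show ?case using \<alpha> by simp
next
  case (insert v W)
  define \<beta> where "\<beta> = (\<lambda>g. \<alpha> g * (\<Prod>v\<in>W. \<alpha> g - v))"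
  have "\<beta> \<circ>\<^sub>H \<alpha> \<in> S" using had \<alpha> insert.IH unfolding \<beta>_def by blast
  then have "(\<lambda>g. (\<beta> \<circ>\<^sub>H \<alpha>) g + (- v) * \<beta> g) \<in> S"
    using insert.IH sub unfolding \<beta>_def
    by (intro group_ring_subspace_add group_ring_subspace_smult)
  moreover have "(\<lambda>g. (\<beta> \<circ>\<^sub>H \<alpha>) g + (- v) * \<beta> g) = (\<lambda>g. \<alpha> g * (\<Prod>v\<in>insert v W. \<alpha> g - v))"
    using insert.hyps unfolding \<beta>_def hadamard_def by (simp add: algebra_simps)
  ultimately show ?case by simp
qed

lemma lagrange_indicator:
  fixes c x :: "'f::field"
  assumes "finite W" "c \<noteq> 0" "c \<notin> W" "x \<in> insert 0 (insert c W)"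
  shows "x * (\<Prod>v\<in>W. x - v) / (c * (\<Prod>v\<in>W. c - v)) = (if x = c then 1 else 0)"
proof -
  have "(\<Prod>v\<in>W. c - v) \<noteq> 0" using assms(1,3) by simp
  moreover have "x \<noteq> c \<Longrightarrow> x * (\<Prod>v\<in>W. x - v) = 0" using assms(1,4) by auto
  ultimately show ?thesis using assms(2) by auto
qed

theorem lemma2p6:
  fixes G :: "('g, 'm) monoid_scheme" and S :: "('g \<Rightarrow> 'f::field_char_0) set"
  assumes "group G"
    and "group_ring_subspace G S"
    and "\<forall>\<alpha>\<in>S. \<forall>\<beta>\<in>S. \<alpha> \<circ>\<^sub>H \<beta> \<in> S"
    and "\<alpha> \<in> S" and "c \<noteq> 0"
  shows "simple_quantity (coeff_complex G \<alpha> c) \<in> S"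
proof -
  have \<alpha>: "\<alpha> \<in> group_ring G" using assms(2,4) unfolding group_ring_subspace_def by blast
  define W where "W = \<alpha> ` {g. \<alpha> g \<noteq> 0} - {c}"
  define d where "d = c * (\<Prod>v\<in>W. c - v)"
  have W: "finite W" "c \<notin> W" "\<And>g. \<alpha> g \<in> insert 0 (insert c W)"
    using \<alpha> unfolding W_def group_ring_def by auto
  have "(\<lambda>g. inverse d * (\<alpha> g * (\<Prod>v\<in>W. \<alpha> g - v))) \<in> S"
    using assms(2-4) W(1)
    by (intro group_ring_subspace_smult group_ring_subspace_mult_prod_diff)
  moreover have "(\<lambda>g. inverse d * (\<alpha> g * (\<Prod>v\<in>W. \<alpha> g - v))) = simple_quantity (coeff_complex G \<alpha> c)"
  proof
    fix g
    have "\<alpha> g = c \<Longrightarrow> g \<in> carrier G" using \<alpha> assms(5) unfolding group_ring_def by auto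
    then show "inverse d * (\<alpha> g * (\<Prod>v\<in>W. \<alpha> g - v)) = simple_quantity (coeff_complex G \<alpha> c) g"
      using lagrange_indicator[OF W(1) assms(5) W(2,3)]
      unfolding d_def simple_quantity_def coeff_complex_def by (simp add: field_simps)
  qed
  ultimately show ?thesis by simp
qed

end
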